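(* For any histogram $h$ of a distribution, and any simple learning algorithm, given a faithful set of $n$ samples from the distribution, the total $\ell_1$ error of the algorithm's output is at least $$\Big(\sum_{1\le j<\log^2 n}dev_{j,n}(h,m_{h,j,n})\Big)-O(\log^{-2}n),$$ with the implicit constant independent of $h$, the samples and the algorithm.
   Context: A distribution learner is simple if all domain elements seen exactly $j$ times in the samples are assigned the same probability (for each $j$). $\log$ is natural; $poi(\lambda,j)=e^{-\lambda}\lambda^j/j!$; $h(x)$ is the number of domain elements of probability $x$. Faithful: for an integer $k\ge0$, bucket $k$ consists of histogram entries with probabilities in $(\frac{k}{n\log^2n},\frac{k+1}{n\log^2n}]$, $B_{poi}(j,k)=\sum_{x \text{ in bucket }k, h(x)\neq0}h(x)poi(nx,j)$, $B_S(j,k)$ is the number of domain elements in bucket $k$ seen exactly $j$ times in $S$; a set $S$ of $n$ samples is faithful if (1) each domain element of probability $x$ appears $j$ times with $|nx-j|<\max\{\log^{1.5}n,\sqrt{nx\log^{1.5}n}\}$, and (2) for each $j<\log^2n$ and each $k$, $|B_{poi}(j,k)-B_S(j,k)|<n^{0.6}$. $m_{h,j,n}$ is a median of the multiset with $h(x)$ copies of each $x$, element $x$ weighted by $poi(nx,j)$ (at most half the weight strictly above and at most half strictly below). $dev_{j,n}(h,m)=\sum_{x:h(x)\neq0}|x-m|h(x)poi(nx,j)$. *)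

theory Defs
  imports Complex_Main
begin

definition poi :: "real \<Rightarrow> nat \<Rightarrow> real" where
  "poi lam j = exp (- lam) * lam ^ j / fact j"

definition is_distribution :: "nat set \<Rightarrow> (nat \<Rightarrow> real) \<Rightarrow> bool" where
  "is_distribution D p \<longleftrightarrow> finite D \<and> (\<forall>a\<in>D. p a \<ge> 0) \<and> (\<Sum>a\<in>D. p a) = 1"

definition hist :: "nat set \<Rightarrow> (nat \<Rightarrow> real) \<Rightarrow> real \<Rightarrow> nat" where
  "hist D p x = card {a\<in>D. p a = x}"

definition cnt :: "nat list \<Rightarrow> nat \<Rightarrow> nat" where
  "cnt S a = count_list S a"

text \<open>The set of x with h(x) \<noteq> 0 is exactly the image p ` D.\<close>
definition dev :: "nat set \<Rightarrow> (nat \<Rightarrow> real) \<Rightarrow> nat \<Rightarrow> nat \<Rightarrow> real \<Rightarrow> real" where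
  "dev D p j n m = (\<Sum>x\<in>{x. hist D p x \<noteq> 0}. \<bar>x - m\<bar> * real (hist D p x) * poi (real n * x) j)"

definition is_median :: "nat set \<Rightarrow> (nat \<Rightarrow> real) \<Rightarrow> nat \<Rightarrow> nat \<Rightarrow> real \<Rightarrow> bool" where
  "is_median D p j n m \<longleftrightarrow>
     (let W = (\<Sum>x\<in>{x. hist D p x \<noteq> 0}. real (hist D p x) * poi (real n * x) j) in
       (\<Sum>x\<in>{x. hist D p x \<noteq> 0 \<and> x > m}. real (hist D p x) * poi (real n * x) j) \<le> W / 2 \<and>
       (\<Sum>x\<in>{x. hist D p x \<noteq> 0 \<and> x < m}. real (hist D p x) * poi (real n * x) j) \<le> W / 2)"

definition in_bucket :: "nat \<Rightarrow> nat \<Rightarrow> real \<Rightarrow> bool" where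
  "in_bucket n k x \<longleftrightarrow> real k / (real n * (ln (real n))^2) < x \<and> x \<le> (real k + 1) / (real n * (ln (real n))^2)"

definition B_poi :: "nat set \<Rightarrow> (nat \<Rightarrow> real) \<Rightarrow> nat \<Rightarrow> nat \<Rightarrow> nat \<Rightarrow> real" where
  "B_poi D p n j k = (\<Sum>x\<in>{x. hist D p x \<noteq> 0 \<and> in_bucket n k x}. real (hist D p x) * poi (real n * x) j)"

definition B_S :: "nat set \<Rightarrow> (nat \<Rightarrow> real) \<Rightarrow> nat list \<Rightarrow> nat \<Rightarrow> nat \<Rightarrow> nat" where
  "B_S D p S j k = card {a\<in>D. in_bucket (length S) k (p a) \<and> cnt S a = j}"

definition faithful :: "nat set \<Rightarrow> (nat \<Rightarrow> real) \<Rightarrow> nat \<Rightarrow> nat list \<Rightarrow> bool" where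
  "faithful D p n S \<longleftrightarrow>
     (\<forall>a\<in>D. \<bar>real n * p a - real (cnt S a)\<bar>
              < max ((ln (real n)) powr 1.5) (sqrt (real n * p a * (ln (real n)) powr 1.5))) \<and>
     (\<forall>j k. real j < (ln (real n))^2 \<longrightarrow>
              \<bar>B_poi D p n j k - real (B_S D p S j k)\<bar> < real n powr 0.6)"

definition simple_learner :: "nat set \<Rightarrow> (nat list \<Rightarrow> nat \<Rightarrow> real) \<Rightarrow> bool" where
  "simple_learner D L \<longleftrightarrow> (\<forall>S a b. a \<in> D \<longrightarrow> b \<in> D \<longrightarrow> cnt S a = cnt S b \<longrightarrow> L S a = L S b)"

definition l1_error :: "nat set \<Rightarrow> (nat \<Rightarrow> real) \<Rightarrow> (nat \<Rightarrow> real) \<Rightarrow> real" where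
  "l1_error D p q = (\<Sum>a\<in>D. \<bar>p a - q a\<bar>)"

end

theory Submission
  imports Defs "HOL-Real_Asymp.Real_Asymp"
begin

text \<open>Fix a count j. A simple learner gives one common value q to all elements seen j times,
  and since a weighted median minimises the weighted l1 distance, dev_{j,n}(h, m) is at most
  the Poisson-weighted distance sum_x h(x) poi(nx, j) |x - q|. Rounding each probability to the
  right end of its bucket costs 1/(n log^2 n) per unit of weight and turns this into
  sum_k B_poi(j,k) |top_k - q|. Faithfulness (2) replaces B_poi by the empirical counts B_S at
  cost n^0.6 per bucket, and undoing the rounding gives the learner's error on the elements seen
  j times. Faithfulness (1) confines these elements to the first O(log^4 n) buckets, heavier
  elements carry Poisson weight at most exp(-log^2 n), and summed over the O(log^2 n) counts j
  all error terms are O(1/log^2 n).\<close>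

lemma sum_power_div_fact_le_exp:
  fixes y :: real
  assumes "y \<ge> 0" "finite J"
  shows "(\<Sum>j\<in>J. y ^ j / fact j) \<le> exp y"
proof -
  have exp_sums: "(\<lambda>j. y ^ j / fact j) sums exp y"
    using exp_converges[of y] by (simp add: divide_inverse mult.commute scaleR_conv_of_real)
  have "(\<Sum>j\<in>J. y ^ j / fact j) \<le> (\<Sum>j. y ^ j / fact j)"
    by (rule sum_le_suminf) (use exp_sums assms in \<open>auto simp: sums_iff\<close>)
  with exp_sums show ?thesis by (simp add: sums_iff)
qed

lemma poi_nonneg: "y \<ge> 0 \<Longrightarrow> poi y j \<ge> 0"
  by (simp add: poi_def)

lemma sum_poi_le:
  fixes y :: real
  assumes "y \<ge> 0" "finite J" "0 \<notin> J"
  shows "(\<Sum>j\<in>J. poi y j) \<le> y"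
proof -
  have "(\<Sum>j\<in>insert 0 J. y ^ j / fact j) \<le> exp y"
    using sum_power_div_fact_le_exp assms by blast
  hence partial: "(\<Sum>j\<in>J. y ^ j / fact j) \<le> exp y - 1"
    using assms by simp
  have "(\<Sum>j\<in>J. poi y j) = exp (-y) * (\<Sum>j\<in>J. y ^ j / fact j)"
    by (simp add: poi_def sum_distrib_left)
  also have "\<dots> \<le> exp (-y) * (exp y - 1)"
    using partial by (intro mult_left_mono) auto
  also have "\<dots> = 1 - exp (-y)"
    by (simp add: exp_minus field_simps)
  also have "\<dots> \<le> y"
    using exp_ge_add_one_self[of "-y"] by simp
  finally show ?thesis .
qed

lemma poi_le_exp_neg:
  fixes y M :: real
  assumes "4 * M \<le> y" "real j \<le> M"
  shows "poi y j \<le> exp (- M)"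
proof -
  have "(y / 2) ^ j / fact j \<le> exp (y / 2)"
    using sum_power_div_fact_le_exp[of "y / 2" "{j}"] assms by simp
  hence "y ^ j / fact j \<le> 2 ^ j * exp (y / 2)"
    by (simp add: power_divide field_simps)
  moreover have "(2::real) ^ j \<le> exp (real j)"
  proof -
    have "(2::real) ^ j \<le> exp 1 ^ j"
      using exp_ge_add_one_self[of 1] by (intro power_mono) auto
    thus ?thesis by (simp flip: exp_of_nat_mult)
  qed
  ultimately have "y ^ j / fact j \<le> exp (real j) * exp (y / 2)"
    by (meson exp_ge_zero mult_right_mono order_trans)
  hence "poi y j \<le> exp (- y) * (exp (real j) * exp (y / 2))"
    unfolding poi_def by (metis exp_ge_zero mult_left_mono times_divide_eq_right)
  also have "\<dots> = exp (real j - y / 2)"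
    by (simp flip: exp_add)
  also have "\<dots> \<le> exp (- M)"
    using assms by simp
  finally show ?thesis .
qed

lemma weighted_median_le_right:
  fixes w x :: "'a \<Rightarrow> real"
  assumes fin: "finite D" and w_nonneg: "\<And>a. a \<in> D \<Longrightarrow> w a \<ge> 0"
    and upper: "(\<Sum>a\<in>{a\<in>D. x a > m}. w a) \<le> (\<Sum>a\<in>D. w a) / 2"
    and "m \<le> q"
  shows "(\<Sum>a\<in>D. w a * \<bar>x a - m\<bar>) \<le> (\<Sum>a\<in>D. w a * \<bar>x a - q\<bar>)"
proof -
  \<comment> \<open>Moving the centre from \<open>m\<close> up to \<open>q\<close> changes each distance by at least \<open>(q - m) * s a\<close>,
    and the median condition makes the weighted sign sum nonnegative.\<close>
  define s where "s a = (if x a > m then -1 else (1::real))" for a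
  have "(\<Sum>a\<in>D. w a * s a) = (\<Sum>a\<in>D. w a) - 2 * (\<Sum>a\<in>{a\<in>D. x a > m}. w a)"
  proof -
    have "w a * s a = w a - 2 * (if x a > m then w a else 0)" for a
      by (simp add: s_def)
    hence "(\<Sum>a\<in>D. w a * s a) = (\<Sum>a\<in>D. w a) - 2 * (\<Sum>a\<in>D. if x a > m then w a else 0)"
      by (simp add: sum_subtractf sum_distrib_left)
    thus ?thesis
      using fin by (simp add: sum.inter_filter)
  qed
  with upper have sign_sum: "(\<Sum>a\<in>D. w a * s a) \<ge> 0"
    by linarith
  have pointwise: "w a * \<bar>x a - m\<bar> + (q - m) * (w a * s a) \<le> w a * \<bar>x a - q\<bar>" if "a \<in> D" for a
  proof -
    have "\<bar>x a - m\<bar> + (q - m) * s a \<le> \<bar>x a - q\<bar>"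
      using \<open>m \<le> q\<close> by (auto simp: s_def abs_if)
    from mult_left_mono[OF this w_nonneg[OF that]] show ?thesis
      by (simp add: algebra_simps)
  qed
  have "(\<Sum>a\<in>D. w a * \<bar>x a - m\<bar>) \<le> (\<Sum>a\<in>D. w a * \<bar>x a - m\<bar>) + (q - m) * (\<Sum>a\<in>D. w a * s a)"
    using \<open>m \<le> q\<close> sign_sum by simp
  also have "\<dots> = (\<Sum>a\<in>D. w a * \<bar>x a - m\<bar> + (q - m) * (w a * s a))"
    by (simp add: sum.distrib sum_distrib_left)
  also have "\<dots> \<le> (\<Sum>a\<in>D. w a * \<bar>x a - q\<bar>)"
    using pointwise by (rule sum_mono)
  finally show ?thesis .
qed

lemma weighted_median_le:
  fixes w x :: "'a \<Rightarrow> real"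
  assumes fin: "finite D" and w_nonneg: "\<And>a. a \<in> D \<Longrightarrow> w a \<ge> 0"
    and upper: "(\<Sum>a\<in>{a\<in>D. x a > m}. w a) \<le> (\<Sum>a\<in>D. w a) / 2"
    and lower: "(\<Sum>a\<in>{a\<in>D. x a < m}. w a) \<le> (\<Sum>a\<in>D. w a) / 2"
  shows "(\<Sum>a\<in>D. w a * \<bar>x a - m\<bar>) \<le> (\<Sum>a\<in>D. w a * \<bar>x a - q\<bar>)"
proof (cases "m \<le> q")
  case True
  with weighted_median_le_right[OF fin w_nonneg upper] show ?thesis by blast
next
  case False
  have "(\<Sum>a\<in>D. w a * \<bar>- x a - - m\<bar>) \<le> (\<Sum>a\<in>D. w a * \<bar>- x a - - q\<bar>)"
    using False lower by (intro weighted_median_le_right[OF fin w_nonneg]) simp_all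
  thus ?thesis by (simp add: abs_minus_commute)
qed

lemma sum_hist_eq_sum_domain:
  assumes "finite D"
  shows "(\<Sum>x\<in>{x. hist D p x \<noteq> 0 \<and> P x}. real (hist D p x) * f x) = (\<Sum>a\<in>{a\<in>D. P (p a)}. f (p a))"
proof -
  let ?A = "{a\<in>D. P (p a)}"
  have support: "{x. hist D p x \<noteq> 0 \<and> P x} = p ` ?A"
    using assms by (auto simp: hist_def card_eq_0_iff)
  have "(\<Sum>a\<in>?A. f (p a)) = (\<Sum>x\<in>p ` ?A. \<Sum>a\<in>{b\<in>?A. p b = x}. f (p a))"
    using assms by (intro sum.image_gen) auto
  also have "\<dots> = (\<Sum>x\<in>p ` ?A. real (hist D p x) * f x)"
  proof (rule sum.cong[OF refl])
    fix x assume "x \<in> p ` ?A"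
    then have "{b\<in>?A. p b = x} = {a\<in>D. p a = x}" by auto
    then show "(\<Sum>a\<in>{b\<in>?A. p b = x}. f (p a)) = real (hist D p x) * f x"
      by (simp add: hist_def)
  qed
  finally show ?thesis
    using support by simp
qed

lemma dev_eq_sum_domain:
  "finite D \<Longrightarrow> dev D p j n m = (\<Sum>a\<in>D. poi (real n * p a) j * \<bar>p a - m\<bar>)"
  using sum_hist_eq_sum_domain[where P = "\<lambda>_. True" and f = "\<lambda>x. poi (real n * x) j * \<bar>x - m\<bar>"]
  by (simp add: dev_def mult_ac)

lemma B_poi_eq_sum_domain:
  "finite D \<Longrightarrow> B_poi D p n j k = (\<Sum>a\<in>{a\<in>D. in_bucket n k (p a)}. poi (real n * p a) j)"
  unfolding B_poi_def by (rule sum_hist_eq_sum_domain)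

lemma dev_le_of_is_median:
  assumes dist: "is_distribution D p" and med: "is_median D p j n m"
  shows "dev D p j n m \<le> (\<Sum>a\<in>D. poi (real n * p a) j * \<bar>p a - q\<bar>)"
proof -
  define w where "w a = poi (real n * p a) j" for a
  have fin: "finite D" and w_nonneg: "\<And>a. a \<in> D \<Longrightarrow> w a \<ge> 0"
    using dist by (auto simp: is_distribution_def w_def intro: poi_nonneg)
  have weight: "(\<Sum>x\<in>{x. hist D p x \<noteq> 0 \<and> P x}. real (hist D p x) * poi (real n * x) j)
      = (\<Sum>a\<in>{a\<in>D. P (p a)}. w a)" for P
    unfolding w_def by (rule sum_hist_eq_sum_domain[OF fin])
  have "(\<Sum>a\<in>{a\<in>D. p a > m}. w a) \<le> (\<Sum>a\<in>D. w a) / 2"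
    "(\<Sum>a\<in>{a\<in>D. p a < m}. w a) \<le> (\<Sum>a\<in>D. w a) / 2"
    using med weight[of "\<lambda>x. x > m"] weight[of "\<lambda>x. x < m"] weight[of "\<lambda>_. True"]
    by (simp_all add: is_median_def Let_def)
  from weighted_median_le[OF fin w_nonneg this, of q] show ?thesis
    by (simp add: dev_eq_sum_domain[OF fin] w_def)
qed

definition bucket_index :: "nat \<Rightarrow> real \<Rightarrow> nat" where
  "bucket_index n x = nat (\<lceil>x * (real n * (ln (real n))^2)\<rceil> - 1)"

lemma in_bucket_iff_bucket_index:
  assumes "real n * (ln (real n))^2 > 0"
  shows "in_bucket n k x \<longleftrightarrow> x > 0 \<and> bucket_index n x = k"
proof -
  define c where "c = real n * (ln (real n))^2"
  have c: "c > 0" using assms c_def by simp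
  have "in_bucket n k x \<longleftrightarrow> \<lceil>x * c\<rceil> = int k + 1"
    unfolding in_bucket_def c_def[symmetric] ceiling_eq_iff using c by (simp add: field_simps)
  also have "\<dots> \<longleftrightarrow> x > 0 \<and> bucket_index n x = k"
  proof
    assume ceil: "\<lceil>x * c\<rceil> = int k + 1"
    hence "0 < \<lceil>x * c\<rceil>"
      by simp
    hence "x * c > 0"
      by simp
    with ceil c show "x > 0 \<and> bucket_index n x = k"
      by (simp add: bucket_index_def c_def[symmetric] zero_less_mult_iff)
  next
    assume index: "x > 0 \<and> bucket_index n x = k"
    with c have "\<lceil>x * c\<rceil> \<ge> 1"
      by simp
    with index show "\<lceil>x * c\<rceil> = int k + 1"
      unfolding bucket_index_def c_def[symmetric] by linarith
  qed
  finally show ?thesis .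
qed

lemma bucket_index_bounds:
  assumes "real n * (ln (real n))^2 > 0" "x > 0"
  shows "real (bucket_index n x) / (real n * (ln (real n))^2) < x"
    and "x \<le> (real (bucket_index n x) + 1) / (real n * (ln (real n))^2)"
  using in_bucket_iff_bucket_index[OF assms(1), of "bucket_index n x" x] assms(2)
  by (simp_all add: in_bucket_def)

lemma bucket_index_less_iff:
  assumes "real n * (ln (real n))^2 > 0" "x > 0"
  shows "bucket_index n x < K \<longleftrightarrow> x \<le> real K / (real n * (ln (real n))^2)"
proof -
  define c where "c = real n * (ln (real n))^2"
  have "x * c > 0" using assms c_def by simp
  hence "\<lceil>x * c\<rceil> \<ge> 1"
    by simp
  hence "bucket_index n x < K \<longleftrightarrow> \<lceil>x * c\<rceil> \<le> int K"
    unfolding bucket_index_def c_def[symmetric] by linarith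
  hence "bucket_index n x < K \<longleftrightarrow> x * c \<le> real K"
    by (simp add: ceiling_le_iff)
  thus ?thesis
    using assms(1) by (simp add: c_def pos_le_divide_eq)
qed

definition bucket_top :: "nat \<Rightarrow> nat \<Rightarrow> real" where
  "bucket_top n k = (real k + 1) / (real n * (ln (real n))^2)"

lemma sum_over_buckets:
  fixes g :: "'a \<Rightarrow> real" and f :: "nat \<Rightarrow> real"
  assumes fin: "finite A" and c: "real n * (ln (real n))^2 > 0"
  shows "(\<Sum>a\<in>{a\<in>A. 0 < p a \<and> p a \<le> real K / (real n * (ln (real n))^2)}. g a * f (bucket_index n (p a)))
       = (\<Sum>k<K. (\<Sum>a\<in>{a\<in>A. in_bucket n k (p a)}. g a) * f k)"
proof -
  let ?A = "{a\<in>A. 0 < p a \<and> p a \<le> real K / (real n * (ln (real n))^2)}"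
  have index_lt: "bucket_index n (p a) < K" if "a \<in> ?A" for a
    using that bucket_index_less_iff[OF c] by auto
  have "(\<Sum>a\<in>?A. g a * f (bucket_index n (p a)))
      = (\<Sum>k<K. \<Sum>a\<in>{a\<in>?A. bucket_index n (p a) = k}. g a * f (bucket_index n (p a)))"
    using fin index_lt by (intro sum.group[symmetric]) auto
  also have "\<dots> = (\<Sum>k<K. (\<Sum>a\<in>{a\<in>A. in_bucket n k (p a)}. g a) * f k)"
  proof (rule sum.cong[OF refl])
    fix k assume "k \<in> {..<K}"
    hence "{a\<in>?A. bucket_index n (p a) = k} = {a\<in>A. in_bucket n k (p a)}"
      using in_bucket_iff_bucket_index[OF c] bucket_index_less_iff[OF c] by auto
    moreover have "(\<Sum>a\<in>{a\<in>?A. bucket_index n (p a) = k}. g a * f (bucket_index n (p a)))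
        = (\<Sum>a\<in>{a\<in>?A. bucket_index n (p a) = k}. g a * f k)"
      by (rule sum.cong) auto
    ultimately show "(\<Sum>a\<in>{a\<in>?A. bucket_index n (p a) = k}. g a * f (bucket_index n (p a)))
        = (\<Sum>a\<in>{a\<in>A. in_bucket n k (p a)}. g a) * f k"
      by (simp add: sum_distrib_right)
  qed
  finally show ?thesis .
qed

lemma sum_abs_sub_bucket_top_approx:
  fixes g :: "'a \<Rightarrow> real"
  assumes fin: "finite A" and c: "real n * (ln (real n))^2 > 0"
    and pos: "\<And>a. a \<in> A \<Longrightarrow> 0 < p a \<and> 0 \<le> g a"
  shows "\<bar>(\<Sum>a\<in>A. g a * \<bar>p a - q\<bar>) - (\<Sum>a\<in>A. g a * \<bar>bucket_top n (bucket_index n (p a)) - q\<bar>)\<bar>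
    \<le> (\<Sum>a\<in>A. g a) / (real n * (ln (real n))^2)"
proof -
  let ?c = "real n * (ln (real n))^2"
  have pointwise: "\<bar>g a * \<bar>p a - q\<bar> - g a * \<bar>bucket_top n (bucket_index n (p a)) - q\<bar>\<bar> \<le> g a / ?c"
    if "a \<in> A" for a
  proof -
    have "\<bar>p a - bucket_top n (bucket_index n (p a))\<bar> \<le> 1 / ?c"
      using bucket_index_bounds[OF c, of "p a"] pos[OF that] c
      by (simp add: bucket_top_def add_divide_distrib abs_if)
    hence "\<bar>\<bar>p a - q\<bar> - \<bar>bucket_top n (bucket_index n (p a)) - q\<bar>\<bar> \<le> 1 / ?c"
      by linarith
    from mult_left_mono[OF this] pos[OF that] show ?thesis
      by (simp add: abs_mult flip: right_diff_distrib)
  qed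
  have "\<bar>(\<Sum>a\<in>A. g a * \<bar>p a - q\<bar>) - (\<Sum>a\<in>A. g a * \<bar>bucket_top n (bucket_index n (p a)) - q\<bar>)\<bar>
      \<le> (\<Sum>a\<in>A. \<bar>g a * \<bar>p a - q\<bar> - g a * \<bar>bucket_top n (bucket_index n (p a)) - q\<bar>\<bar>)"
    by (simp flip: sum_subtractf add: sum_abs)
  also have "\<dots> \<le> (\<Sum>a\<in>A. g a / ?c)"
    using pointwise by (rule sum_mono)
  finally show ?thesis
    by (simp add: sum_divide_distrib)
qed

lemma sum_mult_le_sum_mult_add:
  fixes u v h :: "nat \<Rightarrow> real"
  assumes "\<And>k. k < K \<Longrightarrow> u k \<le> v k + e" "\<And>k. k < K \<Longrightarrow> 0 \<le> h k \<and> h k \<le> H" "0 \<le> e"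
  shows "(\<Sum>k<K. u k * h k) \<le> (\<Sum>k<K. v k * h k) + real K * e * H"
proof -
  have "u k * h k \<le> v k * h k + e * H" if "k < K" for k
  proof -
    have "u k * h k \<le> (v k + e) * h k"
      using assms that by (intro mult_right_mono) auto
    also have "\<dots> \<le> v k * h k + e * H"
      using assms that by (simp add: distrib_right mult_left_mono)
    finally show ?thesis .
  qed
  hence "(\<Sum>k<K. u k * h k) \<le> (\<Sum>k<K. v k * h k + e * H)"
    by (intro sum_mono) auto
  thus ?thesis
    by (simp add: sum.distrib)
qed

lemma small_count_imp_small_mean:
  fixes y l :: real
  assumes l: "l \<ge> 1" and y: "y \<ge> 0" and j: "real j < l^2"
    and close: "\<bar>y - real j\<bar> < max (l powr 1.5) (sqrt (y * l powr 1.5))"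
  shows "y < 4 * l^2"
proof -
  have l_powr: "l powr 1.5 \<le> l^2"
    using l powr_mono[of "1.5" 2 l] by (simp add: powr_realpow)
  show ?thesis
  proof (cases "sqrt (y * l powr 1.5) \<le> l powr 1.5")
    case True
    with close l_powr j show ?thesis
      by auto
  next
    case False
    hence "y - real j < sqrt (y * l powr 1.5)"
      using close by auto
    also have "\<dots> \<le> sqrt (y * l^2)"
      using l_powr y by (intro real_sqrt_le_mono mult_left_mono) auto
    also have "\<dots> = sqrt y * l"
      using l y by (simp add: real_sqrt_mult)
    finally have "y < l^2 + sqrt y * l"
      using j by linarith
    have "sqrt y < 2 * l"
    proof (rule ccontr)
      assume "\<not> sqrt y < 2 * l"
      hence "2 * l * sqrt y \<le> sqrt y * sqrt y" and "l * (2 * l) \<le> l * sqrt y"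
        using l y by (auto intro!: mult_right_mono mult_left_mono simp del: real_sqrt_mult_self)
      with \<open>y < l^2 + sqrt y * l\<close> y l show False
        by (simp add: power2_eq_square algebra_simps)
    qed
    hence "(sqrt y)^2 < (2 * l)^2"
      using y by (intro power_strict_mono) auto
    with y show ?thesis
      by (simp add: power_mult_distrib)
  qed
qed

lemma faithful_count_imp_small_mean:
  assumes faith: "faithful D p n S" and a: "a \<in> D" "p a \<ge> 0" "cnt S a = j"
    and j: "real j < (ln (real n))^2" and l: "ln (real n) \<ge> 1"
  shows "real n * p a < 4 * (ln (real n))^2"
proof (rule small_count_imp_small_mean[OF l _ j])
  show "real n * p a \<ge> 0"
    using a by simp
  show "\<bar>real n * p a - real j\<bar> < max (ln (real n) powr 1.5) (sqrt (real n * p a * ln (real n) powr 1.5))"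
    using faith a(1) a(3)[symmetric] by (simp add: faithful_def)
qed

lemma tail_contribution_le:
  assumes dist: "is_distribution D p" and j: "0 < j" "real j \<le> M" and X: "4 * M \<le> real n * X"
    and q: "0 \<le> q" "q \<le> X"
  shows "(\<Sum>a\<in>{a\<in>D. \<not> (0 < p a \<and> p a \<le> X)}. poi (real n * p a) j * \<bar>p a - q\<bar>) \<le> exp (- M)"
proof -
  let ?T = "{a\<in>D. \<not> (0 < p a \<and> p a \<le> X)}"
  have fin: "finite D" and p_nonneg: "\<And>a. a \<in> D \<Longrightarrow> p a \<ge> 0" and total: "(\<Sum>a\<in>D. p a) = 1"
    using dist by (auto simp: is_distribution_def)
  have "poi (real n * p a) j * \<bar>p a - q\<bar> \<le> exp (- M) * p a" if "a \<in> ?T" for a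
  proof (cases "p a = 0")
    case True
    with j show ?thesis
      by (simp add: poi_def power_0_left)
  next
    case False
    with that p_nonneg have "X < p a"
      by force
    hence "4 * M \<le> real n * p a"
      using X mult_left_mono[of X "p a" "real n"] by simp
    hence "poi (real n * p a) j \<le> exp (- M)"
      using j by (intro poi_le_exp_neg) auto
    moreover have "\<bar>p a - q\<bar> \<le> p a"
      using q \<open>X < p a\<close> by simp
    ultimately show ?thesis
      using p_nonneg that by (intro mult_mono) (auto intro: poi_nonneg)
  qed
  hence "(\<Sum>a\<in>?T. poi (real n * p a) j * \<bar>p a - q\<bar>) \<le> exp (- M) * (\<Sum>a\<in>?T. p a)"
    unfolding sum_distrib_left by (intro sum_mono)
  also have "(\<Sum>a\<in>?T. p a) \<le> (\<Sum>a\<in>D. p a)"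
    using fin p_nonneg by (intro sum_mono2) auto
  finally show ?thesis
    using total by simp
qed

lemma bucket_perturbation_le:
  fixes l e :: real
  assumes l: "l \<ge> 1" and n: "n > 0" and e: "e \<ge> 0"
  shows "real (nat \<lceil>4 * l^4\<rceil>) * e * (2 * (real (nat \<lceil>4 * l^4\<rceil>) / (n * l^2))) \<le> 50 * l^6 * e / n"
proof -
  define K where "K = real (nat \<lceil>4 * l^4\<rceil>)"
  have l4: "l^4 \<ge> 1"
    using l by simp
  hence "0 \<le> \<lceil>4 * l^4\<rceil>"
    unfolding zero_le_ceiling by linarith
  hence "K \<le> 4 * l^4 + 1"
    unfolding K_def by linarith
  with l4 have K_le: "K \<le> 5 * l^4"
    by linarith
  have "0 \<le> K"
    unfolding K_def by (rule of_nat_0_le_iff)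
  with K_le l4 have "K * K \<le> (5 * l^4) * (5 * l^4)"
    by (intro mult_mono) auto
  hence "2 * (K * K) * e / (n * l^2) \<le> 2 * ((5 * l^4) * (5 * l^4)) * e / (n * l^2)"
    using e n l by (intro divide_right_mono mult_right_mono) auto
  also have "\<dots> = 50 * l^6 * e / n"
    using l by (simp add: field_simps power2_eq_square power4_eq_xxxx eval_nat_numeral)
  finally show ?thesis
    by (simp add: K_def[symmetric] field_simps)
qed

lemma gt_one_of_ln_ge_one:
  assumes "ln (real n) \<ge> 1"
  shows "real n > 1"
proof -
  have "n \<noteq> 0"
    using assms by (intro notI) simp
  with assms show ?thesis
    by (intro ln_gt_zero_imp_gt_one) (linarith, simp)
qed

lemma dev_le_bucket_sum:
  assumes dist: "is_distribution D p" and med: "is_median D p j n m"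
    and j: "0 < j" "real j \<le> M" and c: "real n * (ln (real n))^2 > 0"
    and X: "4 * M \<le> real n * (real K / (real n * (ln (real n))^2))"
    and q: "0 \<le> q" "q \<le> real K / (real n * (ln (real n))^2)"
  shows "dev D p j n m \<le> (\<Sum>k<K. B_poi D p n j k * \<bar>bucket_top n k - q\<bar>)
    + (\<Sum>a\<in>D. poi (real n * p a) j) / (real n * (ln (real n))^2) + exp (- M)"
proof -
  define c where "c = real n * (ln (real n))^2"
  define X where "X = real K / c"
  define w where "w a = poi (real n * p a) j" for a
  define Low where "Low = {a\<in>D. 0 < p a \<and> p a \<le> X}"
  define h where "h k = \<bar>bucket_top n k - q\<bar>" for k
  have fin: "finite D" and p_nonneg: "\<And>a. a \<in> D \<Longrightarrow> p a \<ge> 0"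
    using dist by (auto simp: is_distribution_def)
  have w_nonneg: "\<And>a. a \<in> D \<Longrightarrow> w a \<ge> 0"
    unfolding w_def using p_nonneg by (intro poi_nonneg) simp
  have split: "(\<Sum>a\<in>D. w a * \<bar>p a - q\<bar>) = (\<Sum>a\<in>Low. w a * \<bar>p a - q\<bar>)
      + (\<Sum>a\<in>{a\<in>D. \<not> (0 < p a \<and> p a \<le> X)}. w a * \<bar>p a - q\<bar>)"
  proof -
    have "D \<inter> {a. 0 < p a \<and> p a \<le> X} = Low"
      and "D - {a. 0 < p a \<and> p a \<le> X} = {a\<in>D. \<not> (0 < p a \<and> p a \<le> X)}"
      by (auto simp: Low_def)
    with sum.Int_Diff[OF fin, where B = "{a. 0 < p a \<and> p a \<le> X}"] show ?thesis
      by simp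
  qed
  have tail: "(\<Sum>a\<in>{a\<in>D. \<not> (0 < p a \<and> p a \<le> X)}. w a * \<bar>p a - q\<bar>) \<le> exp (- M)"
    unfolding w_def X_def c_def using j X q by (intro tail_contribution_le[OF dist]) auto
  have low: "(\<Sum>a\<in>Low. w a * \<bar>p a - q\<bar>) \<le> (\<Sum>a\<in>Low. w a * h (bucket_index n (p a))) + (\<Sum>a\<in>Low. w a) / c"
  proof -
    have "\<bar>(\<Sum>a\<in>Low. w a * \<bar>p a - q\<bar>) - (\<Sum>a\<in>Low. w a * h (bucket_index n (p a)))\<bar>
        \<le> (\<Sum>a\<in>Low. w a) / c"
      unfolding h_def c_def
      by (rule sum_abs_sub_bucket_top_approx) (use fin c w_nonneg in \<open>auto simp: Low_def\<close>)
    thus ?thesis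
      by (auto dest: abs_le_D1)
  qed
  have "(\<Sum>a\<in>Low. w a) / c \<le> (\<Sum>a\<in>D. w a) / c"
    using fin w_nonneg c by (intro divide_right_mono sum_mono2) (auto simp: Low_def c_def)
  moreover have "(\<Sum>a\<in>Low. w a * h (bucket_index n (p a))) = (\<Sum>k<K. B_poi D p n j k * h k)"
    using sum_over_buckets[OF fin, where n = n and p = p and K = K and g = w and f = h] c
    by (simp add: Low_def X_def c_def B_poi_eq_sum_domain[OF fin] w_def)
  moreover have "dev D p j n m \<le> (\<Sum>a\<in>D. w a * \<bar>p a - q\<bar>)"
    unfolding w_def by (rule dev_le_of_is_median[OF dist med])
  ultimately show ?thesis
    using split tail low unfolding h_def w_def c_def by linarith
qed

lemma sum_B_S_le:
  assumes fin: "finite D" and len: "length S = n" and c: "real n * (ln (real n))^2 > 0"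
    and low: "\<And>a. a \<in> D \<Longrightarrow> cnt S a = j \<Longrightarrow> 0 < p a \<and> p a \<le> real K / (real n * (ln (real n))^2)"
  shows "(\<Sum>k<K. real (B_S D p S j k) * \<bar>bucket_top n k - q\<bar>)
    \<le> (\<Sum>a\<in>{a\<in>D. cnt S a = j}. \<bar>p a - q\<bar>) + real (card {a\<in>D. cnt S a = j}) / (real n * (ln (real n))^2)"
proof -
  define Sj where "Sj = {a\<in>D. cnt S a = j}"
  define h where "h k = \<bar>bucket_top n k - q\<bar>" for k
  have fin_Sj: "finite Sj"
    using fin by (simp add: Sj_def)
  have "{a\<in>Sj. 0 < p a \<and> p a \<le> real K / (real n * (ln (real n))^2)} = Sj"
    using low by (auto simp: Sj_def)
  moreover have "B_S D p S j k = card {a\<in>Sj. in_bucket n k (p a)}" for k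
    unfolding B_S_def Sj_def len by (intro arg_cong[where f = card]) auto
  ultimately have "(\<Sum>k<K. real (B_S D p S j k) * h k) = (\<Sum>a\<in>Sj. 1 * h (bucket_index n (p a)))"
    using sum_over_buckets[OF fin_Sj c, where p = p and K = K and g = "\<lambda>_. 1" and f = h] by simp
  moreover have "\<bar>(\<Sum>a\<in>Sj. 1 * \<bar>p a - q\<bar>) - (\<Sum>a\<in>Sj. 1 * h (bucket_index n (p a)))\<bar>
      \<le> (\<Sum>a\<in>Sj. 1) / (real n * (ln (real n))^2)"
    unfolding h_def by (rule sum_abs_sub_bucket_top_approx) (use fin_Sj c low in \<open>auto simp: Sj_def\<close>)
  ultimately show ?thesis
    unfolding Sj_def h_def by (auto dest: abs_le_D2)
qed

lemma count_class_in_low_buckets: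
  assumes faith: "faithful D p n S" and sub: "set S \<subseteq> {a\<in>D. p a > 0}"
    and a: "a \<in> D" "cnt S a = j" and j: "1 \<le> j" "real j < (ln (real n))^2"
    and l: "ln (real n) \<ge> 1" and K: "4 * ln (real n) ^ 4 \<le> real K"
  shows "0 < p a \<and> p a \<le> real K / (real n * (ln (real n))^2)"
proof -
  have "a \<in> set S"
    using a j count_list_0_iff[of S a] by (auto simp: cnt_def)
  hence pos: "0 < p a"
    using sub by auto
  hence "real n * p a < 4 * (ln (real n))^2"
    using faithful_count_imp_small_mean[OF faith a(1) _ a(2) j(2) l] by simp
  hence "p a * (real n * (ln (real n))^2) < 4 * ln (real n) ^ 4"
    using l by (simp add: power2_eq_square power4_eq_xxxx mult_ac)
  with K have "p a * (real n * (ln (real n))^2) \<le> real K"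
    by linarith
  moreover have "real n * (ln (real n))^2 > 0"
    using gt_one_of_ln_ge_one[OF l] l by simp
  ultimately show ?thesis
    using pos by (simp add: pos_le_divide_eq)
qed

lemma abs_sub_clamp_le:
  fixes x y lo hi :: real
  assumes "lo \<le> x" "x \<le> hi"
  shows "\<bar>x - max lo (min hi y)\<bar> \<le> \<bar>x - y\<bar>"
  using assms by (simp add: max_def min_def abs_if)

lemma exists_clamped_learner_value:
  fixes L :: "nat list \<Rightarrow> nat \<Rightarrow> real"
  assumes simple: "simple_learner D L" and X: "0 \<le> X"
    and low: "\<And>a. a \<in> D \<Longrightarrow> cnt S a = j \<Longrightarrow> 0 \<le> p a \<and> p a \<le> X"
  obtains q where "0 \<le> q" "q \<le> X"
    "(\<Sum>a\<in>{a\<in>D. cnt S a = j}. \<bar>p a - q\<bar>) \<le> (\<Sum>a\<in>{a\<in>D. cnt S a = j}. \<bar>p a - L S a\<bar>)"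
proof -
  define b where "b = (SOME a. a \<in> D \<and> cnt S a = j)"
  have q0: "L S a = L S b" if "a \<in> D" "cnt S a = j" for a
  proof -
    have b_class: "b \<in> D \<and> cnt S b = j"
      unfolding b_def by (rule someI[of _ a]) (simp add: that)
    show ?thesis
      by (rule simple[unfolded simple_learner_def, rule_format]) (use that b_class in auto)
  qed
  define q0 where "q0 = L S b"
  define q where "q = max 0 (min X q0)"
  have "(\<Sum>a\<in>{a\<in>D. cnt S a = j}. \<bar>p a - q\<bar>) \<le> (\<Sum>a\<in>{a\<in>D. cnt S a = j}. \<bar>p a - L S a\<bar>)"
  proof (rule sum_mono)
    fix a assume "a \<in> {a\<in>D. cnt S a = j}"
    with low q0 show "\<bar>p a - q\<bar> \<le> \<bar>p a - L S a\<bar>"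
      unfolding q_def q0_def using abs_sub_clamp_le[of 0 "p a" X "L S b"] by simp
  qed
  moreover have "0 \<le> q" "q \<le> X"
    using X by (auto simp: q_def)
  ultimately show ?thesis
    using that by blast
qed

lemma sum_B_poi_le_sum_B_S:
  assumes faith: "faithful D p n S" and j: "real j < (ln (real n))^2"
    and c: "real n * (ln (real n))^2 > 0"
    and q: "0 \<le> q" "q \<le> real K / (real n * (ln (real n))^2)"
  shows "(\<Sum>k<K. B_poi D p n j k * \<bar>bucket_top n k - q\<bar>)
    \<le> (\<Sum>k<K. real (B_S D p S j k) * \<bar>bucket_top n k - q\<bar>)
      + real K * real n powr 0.6 * (2 * (real K / (real n * (ln (real n))^2)))"
proof (rule sum_mult_le_sum_mult_add)
  show "B_poi D p n j k \<le> real (B_S D p S j k) + real n powr 0.6" for k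
    using faith j unfolding faithful_def by (smt (verit))
  show "0 \<le> \<bar>bucket_top n k - q\<bar> \<and> \<bar>bucket_top n k - q\<bar> \<le> 2 * (real K / (real n * (ln (real n))^2))"
    if "k < K" for k
  proof -
    have "0 \<le> bucket_top n k" and "bucket_top n k \<le> real K / (real n * (ln (real n))^2)"
      using that c by (simp_all add: bucket_top_def divide_right_mono)
    with q show ?thesis
      by (simp add: abs_if)
  qed
qed simp

lemma exp_neg_ln_sq_le:
  assumes "ln (real n) \<ge> 1"
  shows "exp (- ((ln (real n))^2)) \<le> 1 / real n"
proof -
  have "exp (- ((ln (real n))^2)) \<le> exp (- ln (real n))"
    using assms by (simp add: power2_eq_square)
  thus ?thesis
    using gt_one_of_ln_ge_one[OF assms] by (simp add: exp_minus inverse_eq_divide)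
qed

lemma dev_le_count_error:
  fixes D :: "nat set" and p :: "nat \<Rightarrow> real" and L :: "nat list \<Rightarrow> nat \<Rightarrow> real"
  assumes dist: "is_distribution D p" and len: "length S = n" and sub: "set S \<subseteq> {a\<in>D. p a > 0}"
    and faith: "faithful D p n S" and simple: "simple_learner D L" and med: "is_median D p j n m"
    and j: "1 \<le> j" "real j < (ln (real n))^2" and l: "ln (real n) \<ge> 1"
  shows "dev D p j n m \<le> (\<Sum>a\<in>{a\<in>D. cnt S a = j}. \<bar>p a - L S a\<bar>)
     + ((\<Sum>a\<in>D. poi (real n * p a) j) + real (card {a\<in>D. cnt S a = j})) / (real n * (ln (real n))^2)
     + 50 * ln (real n) ^ 6 * real n powr 0.6 / real n + 1 / real n"
proof -
  \<comment> \<open>The first \<open>K\<close> buckets reach up to \<open>X \<ge> 4 ln\<^sup>2 n / n\<close>: by faithfulness no element above \<open>X\<close>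
    is seen \<open>j\<close> times, and its Poisson weight is at most \<open>exp (- ln\<^sup>2 n)\<close>.\<close>
  define c where "c = real n * (ln (real n))^2"
  define K where "K = nat \<lceil>4 * ln (real n) ^ 4\<rceil>"
  define X where "X = real K / c"
  define Sj where "Sj = {a\<in>D. cnt S a = j}"
  have n: "real n > 1"
    using gt_one_of_ln_ge_one[OF l] .
  have c: "c > 0"
    using n l by (simp add: c_def)
  have K: "4 * ln (real n) ^ 4 \<le> real K"
    unfolding K_def by linarith
  have low: "0 < p a \<and> p a \<le> X" if "a \<in> D" "cnt S a = j" for a
    unfolding X_def c_def using count_class_in_low_buckets[OF faith sub that j l K] .
  have "0 \<le> X"
    using c by (simp add: X_def)
  moreover have "0 \<le> p a \<and> p a \<le> X" if "a \<in> D" "cnt S a = j" for a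
    using low[OF that] by simp
  ultimately obtain q where q: "0 \<le> q" "q \<le> X"
    and learner: "(\<Sum>a\<in>Sj. \<bar>p a - q\<bar>) \<le> (\<Sum>a\<in>Sj. \<bar>p a - L S a\<bar>)"
    unfolding Sj_def by (rule exists_clamped_learner_value[OF simple])
  have "4 * (ln (real n))^2 \<le> real n * X"
  proof -
    have "4 * (ln (real n))^2 * (ln (real n))^2 \<le> real K"
      using K by (simp add: power4_eq_xxxx power2_eq_square mult_ac)
    hence "4 * (ln (real n))^2 \<le> real K / (ln (real n))^2"
      using l by (simp add: pos_le_divide_eq)
    also have "\<dots> = real n * X"
      using n by (simp add: X_def c_def)
    finally show ?thesis .
  qed
  hence "dev D p j n m \<le> (\<Sum>k<K. B_poi D p n j k * \<bar>bucket_top n k - q\<bar>)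
      + (\<Sum>a\<in>D. poi (real n * p a) j) / c + exp (- ((ln (real n))^2))"
    using j q c unfolding X_def c_def by (intro dev_le_bucket_sum[OF dist med]) auto
  moreover have "(\<Sum>k<K. B_poi D p n j k * \<bar>bucket_top n k - q\<bar>)
      \<le> (\<Sum>k<K. real (B_S D p S j k) * \<bar>bucket_top n k - q\<bar>) + real K * real n powr 0.6 * (2 * X)"
    using sum_B_poi_le_sum_B_S[OF faith j(2)] c q unfolding X_def c_def by blast
  moreover have "(\<Sum>k<K. real (B_S D p S j k) * \<bar>bucket_top n k - q\<bar>)
      \<le> (\<Sum>a\<in>Sj. \<bar>p a - q\<bar>) + real (card Sj) / c"
    unfolding Sj_def c_def using dist len c low
    by (intro sum_B_S_le) (auto simp: is_distribution_def X_def c_def)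
  moreover have "real K * real n powr 0.6 * (2 * X) \<le> 50 * ln (real n) ^ 6 * real n powr 0.6 / real n"
    using bucket_perturbation_le[OF l, of "real n" "real n powr 0.6"] n
    by (simp add: K_def X_def c_def)
  moreover have "((\<Sum>a\<in>D. poi (real n * p a) j) + real (card Sj)) / c
      = (\<Sum>a\<in>D. poi (real n * p a) j) / c + real (card Sj) / c"
    by (rule add_divide_distrib)
  ultimately show ?thesis
    using learner exp_neg_ln_sq_le[OF l] unfolding Sj_def c_def by linarith
qed

lemma sum_count_classes:
  assumes "finite D" "finite J"
  shows "(\<Sum>j\<in>J. \<Sum>a\<in>{a\<in>D. cnt S a = j}. f a) = (\<Sum>a\<in>{a\<in>D. cnt S a \<in> J}. f a)"
proof -
  have "(\<Sum>j\<in>J. \<Sum>a\<in>{a\<in>{a\<in>D. cnt S a \<in> J}. cnt S a = j}. f a) = (\<Sum>a\<in>{a\<in>D. cnt S a \<in> J}. f a)"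
    using assms by (intro sum.group) auto
  moreover have "{a\<in>{a\<in>D. cnt S a \<in> J}. cnt S a = j} = {a\<in>D. cnt S a = j}" if "j \<in> J" for j
    using that by auto
  ultimately show ?thesis
    by simp
qed

lemma card_seen_le_length:
  assumes "finite D" "0 \<notin> J"
  shows "card {a\<in>D. cnt S a \<in> J} \<le> length S"
proof -
  have "{a\<in>D. cnt S a \<in> J} \<subseteq> set S"
  proof
    fix a assume "a \<in> {a\<in>D. cnt S a \<in> J}"
    with assms(2) have "count_list S a \<noteq> 0"
      unfolding cnt_def by (metis mem_Collect_eq)
    thus "a \<in> set S"
      by (simp add: count_list_0_iff)
  qed
  hence "card {a\<in>D. cnt S a \<in> J} \<le> card (set S)"
    by (intro card_mono) auto
  also have "\<dots> \<le> length S"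
    by (rule card_length)
  finally show ?thesis .
qed

lemma sum_sum_poi_le:
  assumes dist: "is_distribution D p" and J: "finite J" "0 \<notin> J"
  shows "(\<Sum>j\<in>J. \<Sum>a\<in>D. poi (real n * p a) j) \<le> real n"
proof -
  have "(\<Sum>j\<in>J. \<Sum>a\<in>D. poi (real n * p a) j) = (\<Sum>a\<in>D. \<Sum>j\<in>J. poi (real n * p a) j)"
    by (rule sum.swap)
  also have "\<dots> \<le> (\<Sum>a\<in>D. real n * p a)"
    using dist J by (intro sum_mono sum_poi_le) (auto simp: is_distribution_def)
  also have "\<dots> = real n"
    using dist by (simp add: is_distribution_def flip: sum_distrib_left)
  finally show ?thesis .
qed

lemma small_counts_finite_card:
  fixes x :: real
  assumes "x \<ge> 0"
  shows "finite {j::nat. 1 \<le> j \<and> real j < x}" and "real (card {j::nat. 1 \<le> j \<and> real j < x}) \<le> x + 1"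
proof -
  have sub: "{j::nat. 1 \<le> j \<and> real j < x} \<subseteq> {1..nat \<lceil>x\<rceil>}"
    by auto linarith
  thus "finite {j::nat. 1 \<le> j \<and> real j < x}"
    by (rule finite_subset) simp
  from sub have "card {j::nat. 1 \<le> j \<and> real j < x} \<le> nat \<lceil>x\<rceil>"
    using card_mono[of "{1..nat \<lceil>x\<rceil>}"] by fastforce
  hence "real (card {j::nat. 1 \<le> j \<and> real j < x}) \<le> real_of_int \<lceil>x\<rceil>"
    using assms by linarith
  thus "real (card {j::nat. 1 \<le> j \<and> real j < x}) \<le> x + 1"
    by linarith
qed

lemma sum_dev_le_l1_error:
  fixes D :: "nat set" and p :: "nat \<Rightarrow> real" and L :: "nat list \<Rightarrow> nat \<Rightarrow> real"
  assumes dist: "is_distribution D p" and len: "length S = n" and sub: "set S \<subseteq> {a\<in>D. p a > 0}"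
    and faith: "faithful D p n S" and simple: "simple_learner D L"
    and med: "\<And>j. is_median D p j n (m j)" and l: "ln (real n) \<ge> 1"
  shows "(\<Sum>j\<in>{j. 1 \<le> j \<and> real j < (ln (real n))^2}. dev D p j n (m j))
    \<le> l1_error D p (L S) + 2 / (ln (real n))^2
      + ((ln (real n))^2 + 1) * (50 * ln (real n) ^ 6 * real n powr 0.6 / real n + 1 / real n)"
proof -
  define J where "J = {j. 1 \<le> j \<and> real j < (ln (real n))^2}"
  define c where "c = real n * (ln (real n))^2"
  define E where "E = 50 * ln (real n) ^ 6 * real n powr 0.6 / real n + 1 / real n"
  have fin: "finite D"
    using dist by (simp add: is_distribution_def)
  have J: "finite J" "0 \<notin> J" "real (card J) \<le> (ln (real n))^2 + 1"
    using small_counts_finite_card[of "(ln (real n))^2"] by (auto simp: J_def)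
  have n: "real n > 1"
    using gt_one_of_ln_ge_one[OF l] .
  have E: "E \<ge> 0"
    using n by (simp add: E_def)
  have "(\<Sum>j\<in>J. dev D p j n (m j)) \<le> (\<Sum>j\<in>J. (\<Sum>a\<in>{a\<in>D. cnt S a = j}. \<bar>p a - L S a\<bar>)
      + ((\<Sum>a\<in>D. poi (real n * p a) j) + real (card {a\<in>D. cnt S a = j})) / c + E)"
  proof (rule sum_mono)
    fix j assume "j \<in> J"
    thus "dev D p j n (m j) \<le> (\<Sum>a\<in>{a\<in>D. cnt S a = j}. \<bar>p a - L S a\<bar>)
        + ((\<Sum>a\<in>D. poi (real n * p a) j) + real (card {a\<in>D. cnt S a = j})) / c + E"
      using dev_le_count_error[OF dist len sub faith simple med _ _ l, of j]
      by (simp add: J_def c_def E_def add.assoc)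
  qed
  also have "\<dots> = (\<Sum>a\<in>{a\<in>D. cnt S a \<in> J}. \<bar>p a - L S a\<bar>)
      + ((\<Sum>j\<in>J. \<Sum>a\<in>D. poi (real n * p a) j) + real (card {a\<in>D. cnt S a \<in> J})) / c + real (card J) * E"
    using sum_count_classes[OF fin J(1), where f = "\<lambda>_. 1::real"]
    by (simp add: sum.distrib add_divide_distrib sum_count_classes[OF fin J(1)] flip: sum_divide_distrib)
  also have "\<dots> \<le> l1_error D p (L S) + (real n + real n) / c + ((ln (real n))^2 + 1) * E"
  proof -
    have "(\<Sum>a\<in>{a\<in>D. cnt S a \<in> J}. \<bar>p a - L S a\<bar>) \<le> l1_error D p (L S)"
      unfolding l1_error_def using fin by (intro sum_mono2) auto
    moreover have "real (card {a\<in>D. cnt S a \<in> J}) \<le> real n"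
      using card_seen_le_length[OF fin J(2), of S] len by simp
    moreover have "c > 0"
      using n l by (simp add: c_def)
    ultimately show ?thesis
      using sum_sum_poi_le[OF dist J(1,2), of n] J(3) E
      by (intro add_mono divide_right_mono mult_right_mono) auto
  qed
  also have "(real n + real n) / c = 2 / (ln (real n))^2"
    using n by (simp add: c_def)
  finally show ?thesis
    unfolding J_def E_def .
qed

lemma eventually_error_small:
  "\<exists>N. \<forall>n\<ge>N. ln (real n) \<ge> 1 \<and>
     ((ln (real n))^2 + 1) * (50 * ln (real n) ^ 6 * real n powr 0.6 / real n + 1 / real n) \<le> 1 / (ln (real n))^2"
proof -
  have "eventually (\<lambda>n::nat. ln (real n) \<ge> 1 \<and>
     ((ln (real n))^2 + 1) * (50 * ln (real n) ^ 6 * real n powr 0.6 / real n + 1 / real n) \<le> 1 / (ln (real n))^2) at_top"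
    by (intro eventually_conj; real_asymp)
  thus ?thesis
    by (simp add: eventually_at_top_linorder)
qed

theorem corollary4:
  shows "\<exists>C N. \<forall>n \<ge> N. \<forall>(D::nat set) p S L m.
     is_distribution D p \<longrightarrow> length S = n \<longrightarrow> set S \<subseteq> {a\<in>D. p a > 0} \<longrightarrow>
     faithful D p n S \<longrightarrow> simple_learner D L \<longrightarrow>
     (\<forall>j. is_median D p j n (m j)) \<longrightarrow>
     l1_error D p (L S) \<ge>
       (\<Sum>j\<in>{j. 1 \<le> j \<and> real j < (ln (real n))^2}. dev D p j n (m j)) - C / (ln (real n))^2"
proof -
  obtain N where N: "\<And>n. n \<ge> N \<Longrightarrow> ln (real n) \<ge> 1 \<and>
     ((ln (real n))^2 + 1) * (50 * ln (real n) ^ 6 * real n powr 0.6 / real n + 1 / real n) \<le> 1 / (ln (real n))^2"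
    using eventually_error_small by blast
  have "l1_error D p (L S) \<ge>
      (\<Sum>j\<in>{j. 1 \<le> j \<and> real j < (ln (real n))^2}. dev D p j n (m j)) - 3 / (ln (real n))^2"
    if "n \<ge> N" "is_distribution D p" "length S = n" "set S \<subseteq> {a\<in>D. p a > 0}"
      "faithful D p n S" "simple_learner D L" "\<forall>j. is_median D p j n (m j)"
    for n D p S L m
    using sum_dev_le_l1_error[of D p S n L m] N[OF that(1)] that(2-7) by auto
  thus ?thesis
    by blast
qed

end
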